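(* Let $a$ be a prime, $s\ge1$, $k_1,\dots,k_s\ge0$ integers with $k_{\max}=\max_xk_x>0$, and $F=F_{a^{k_1}}\otimes\cdots\otimes F_{a^{k_s}}$ of size $N=a^{k_1+\cdots+k_s}$. Then (a) $\mathbf D(F)$ is divisible by $N/a=a^{-1+\sum_xk_x}$; (b) the dephased defect $\mathbf d(F)=\mathbf D(F)-(2N-1)$ is divisible by $(a-1)^2$.
   Context: For $n\ge1$, $F_n$ is the $n\times n$ matrix with rows and columns indexed by $\mathbb Z_n$ and entries $e^{2\pi i\,\tilde i\tilde j/n}$; $\otimes$ is the Kronecker product. For an $N\times N$ rescaled unitary matrix $V$ with no zero entries, the undephased defect is $\mathbf D(V)=\dim_{\mathbb R}\{iR\circ V:\ R\text{ real},\ (iR\circ V)V^*\text{ antihermitian}\}$ ($\circ$ entrywise product); for a Fourier matrix it equals the number of its entries equal to $1$. *)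

theory Defs
  imports "HOL-Analysis.Analysis" "HOL-Library.Function_Algebras"
begin

text \<open>Square complex matrices of size N are represented as functions
  nat \<Rightarrow> nat \<Rightarrow> complex; only entries with indices below N are meaningful.\<close>

type_synonym cmat = "nat \<Rightarrow> nat \<Rightarrow> complex"

definition fourier :: "nat \<Rightarrow> cmat" where
  "fourier n = (\<lambda>i j. exp (2 * pi * \<i> * of_nat (i * j) / of_nat n))"

definition kron :: "cmat \<Rightarrow> nat \<Rightarrow> cmat \<Rightarrow> cmat" where
  "kron A n B = (\<lambda>i j. A (i div n) (j div n) * B (i mod n) (j mod n))"

fun fourier_tensor :: "nat list \<Rightarrow> cmat" where
  "fourier_tensor [] = (\<lambda>i j. 1)"
| "fourier_tensor (n # ns) = kron (fourier n) (prod_list ns) (fourier_tensor ns)"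

definition real_scale_mat :: "real \<Rightarrow> cmat \<Rightarrow> cmat" where
  "real_scale_mat r M = (\<lambda>i j. complex_of_real r * M i j)"

definition mat_mult_adj :: "nat \<Rightarrow> cmat \<Rightarrow> cmat \<Rightarrow> cmat" where
  "mat_mult_adj N A V = (\<lambda>i j. \<Sum>k<N. A i k * cnj (V j k))"

definition antihermitian :: "nat \<Rightarrow> cmat \<Rightarrow> bool" where
  "antihermitian N M \<longleftrightarrow> (\<forall>i<N. \<forall>j<N. M i j = - cnj (M j i))"

definition iR_had :: "nat \<Rightarrow> (nat \<Rightarrow> nat \<Rightarrow> real) \<Rightarrow> cmat \<Rightarrow> cmat" where
  "iR_had N R V = (\<lambda>i j. if i < N \<and> j < N then \<i> * complex_of_real (R i j) * V i j else 0)"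

definition undephased_defect :: "nat \<Rightarrow> cmat \<Rightarrow> nat" where
  "undephased_defect N V =
     vector_space.dim real_scale_mat
       {iR_had N R V | R. antihermitian N (mat_mult_adj N (iR_had N R V) V)}"

end

theory Submission
  imports Defs "HOL-Computational_Algebra.Primes"
begin

text \<open>The Kronecker product F of Fourier matrices is the character table of the
  abelian group \<open>Z_{a^k1} \<times> \<dots> \<times> Z_{a^ks}\<close>. For any such table the defect space has an explicit
  basis, one matrix \<open>i (cas_k \<otimes> cas_e) \<circ> F\<close> for each entry \<open>F_ek = 1\<close>, where \<open>cas = Re + Im\<close> is the
  Hartley kernel; orthogonality of characters makes these independent and shows that the
  coefficients of any element along entries \<open>F_ek \<noteq> 1\<close> vanish. So \<open>D(F)\<close> is the number of ones.
  Since all entries are \<open>a^K\<close>-th roots of unity (\<open>K = max k\<close>), averaging \<open>F_ek^t\<close> over \<open>t < a^K\<close>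
  counts them: \<open>D(F) a^K = N \<Sum>_{t<a^K} \<Prod>_x gcd(a^k_x, t)\<close>. Splitting \<open>t\<close> according to whether
  \<open>a\<close> divides it gives a recursion in \<open>K\<close>, from which both divisibility properties follow by
  induction.\<close>

section \<open>Character tables\<close>

definition zeta :: "nat \<Rightarrow> complex" where
  "zeta n = exp (2 * pi * \<i> / of_nat n)"

lemma zeta_power: "zeta n ^ m = exp (2 * pi * \<i> * of_nat m / of_nat n)"
  unfolding zeta_def by (simp add: exp_of_nat_mult[symmetric] mult_ac)

lemma zeta_power_eq_1_iff: "n > 0 \<Longrightarrow> zeta n ^ m = 1 \<longleftrightarrow> n dvd m"
  using complex_root_unity_eq_1[of n m] by (simp add: zeta_power)

lemma zeta_power_eq_iff: "n > 0 \<Longrightarrow> zeta n ^ i = zeta n ^ j \<longleftrightarrow> i mod n = j mod n"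
  using complex_root_unity_eq[of n i j] by (simp add: zeta_power)

lemma fourier_eq_zeta_power: "fourier n i j = zeta n ^ (i * j)"
  unfolding fourier_def zeta_power ..

lemma norm_zeta: "norm (zeta n) = 1"
  unfolding zeta_def by (simp add: norm_exp_eq_Re)

lemma zeta_mult_cnj: "zeta n * cnj (zeta n) = 1"
  using complex_norm_square[of "zeta n"] by (simp add: norm_zeta)

lemma zeta_power_mult_cnj: "zeta n ^ m * cnj (zeta n) ^ m = 1"
  by (simp flip: power_mult_distrib add: zeta_mult_cnj)

lemma cnj_zeta:
  assumes "n > 0" shows "cnj (zeta n) = zeta n ^ (n - 1)"
proof -
  have "zeta n * zeta n ^ (n - 1) = 1"
    using assms zeta_power_eq_1_iff[OF assms, of n] by (simp flip: power_Suc)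
  then show ?thesis
    using zeta_mult_cnj[of n] by (metis mult.left_commute mult_1_right)
qed

lemma zeta_power_mult_cnj_eq_1_iff:
  assumes "n > 0" "i < n" "j < n"
  shows "zeta n ^ i * cnj (zeta n) ^ j = 1 \<longleftrightarrow> i = j"
proof
  assume "zeta n ^ i * cnj (zeta n) ^ j = 1"
  then have "zeta n ^ i = zeta n ^ j"
    using zeta_power_mult_cnj[of n j] by (metis mult.assoc mult.commute mult_1_right)
  then show "i = j"
    using assms by (simp add: zeta_power_eq_iff)
qed (simp add: zeta_power_mult_cnj)

locale character_table =
  fixes N :: nat and w :: cmat
  assumes size_pos: "N > 0"
    and unimodular: "\<And>i k. i < N \<Longrightarrow> k < N \<Longrightarrow> w i k * cnj (w i k) = 1"
    and symmetric: "\<And>i k. i < N \<Longrightarrow> k < N \<Longrightarrow> w i k = w k i"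
    and rows_mult_closed: "\<And>i j. i < N \<Longrightarrow> j < N \<Longrightarrow> \<exists>l<N. \<forall>k<N. w l k = w i k * w j k"
    and rows_cnj_closed: "\<And>i. i < N \<Longrightarrow> \<exists>l<N. \<forall>k<N. w l k = cnj (w i k)"
    and rows_orthogonal:
      "\<And>i j. i < N \<Longrightarrow> j < N \<Longrightarrow> (\<Sum>k<N. w i k * cnj (w j k)) = (if i = j then of_nat N else 0)"

lemma character_table_fourier:
  assumes "n > 0" shows "character_table n (fourier n)"
proof
  let ?z = "zeta n"
  have power_mod: "?z ^ (m mod n * k) = ?z ^ (m * k)" for m k
    using assms by (simp add: zeta_power_eq_iff mod_mult_left_eq)
  show "n > 0" by (fact assms)
  show "fourier n i k * cnj (fourier n i k) = 1" for i k
    by (simp add: fourier_eq_zeta_power zeta_power_mult_cnj)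
  show "fourier n i k = fourier n k i" for i k
    by (simp add: fourier_eq_zeta_power mult.commute)
  show "\<exists>l<n. \<forall>k<n. fourier n l k = fourier n i k * fourier n j k" for i j
    using assms power_mod[of "i + j"]
    by (intro exI[of _ "(i + j) mod n"]) (simp add: fourier_eq_zeta_power power_add algebra_simps)
  show "\<exists>l<n. \<forall>k<n. fourier n l k = cnj (fourier n i k)" for i
    using assms power_mod[of "i * (n - 1)"]
    by (intro exI[of _ "i * (n - 1) mod n"]) (simp add: fourier_eq_zeta_power cnj_zeta power_mult[symmetric] algebra_simps)
  show "(\<Sum>k<n. fourier n i k * cnj (fourier n j k)) = (if i = j then of_nat n else 0)"
    if "i < n" "j < n" for i j
  proof -
    define q where "q = ?z ^ i * cnj ?z ^ j"
    have "fourier n i k * cnj (fourier n j k) = q ^ k" for k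
      unfolding fourier_eq_zeta_power q_def by (simp add: power_mult power_mult_distrib mult.commute)
    moreover have "q ^ n = 1"
      using zeta_power_eq_1_iff[OF assms, of "n * (i + j * (n - 1))"]
      by (simp add: q_def cnj_zeta[OF assms] power_mult_distrib algebra_simps flip: power_mult power_add)
    moreover have "q = 1 \<longleftrightarrow> i = j"
      using zeta_power_mult_cnj_eq_1_iff[OF assms that] by (simp add: q_def)
    ultimately show ?thesis
      by (simp add: sum_gp_strict)
  qed
qed

lemma sum_lessThan_mult_div_mod:
  fixes g :: "nat \<Rightarrow> nat \<Rightarrow> 'a::comm_monoid_add"
  assumes "P > 0"
  shows "(\<Sum>k<n * P. g (k div P) (k mod P)) = (\<Sum>i<n. \<Sum>j<P. g i j)"
proof -
  have "(\<Sum>k<n * P. g (k div P) (k mod P)) = (\<Sum>i<n. \<Sum>k\<in>{i * P..<i * P + P}. g (k div P) (k mod P))"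
    by (rule sum.nat_group[symmetric])
  also have "\<dots> = (\<Sum>i<n. \<Sum>j<P. g i j)"
  proof (rule sum.cong[OF refl])
    fix i
    have "(\<Sum>k\<in>{i * P..<i * P + P}. g (k div P) (k mod P)) = (\<Sum>j<P. g ((j + i * P) div P) ((j + i * P) mod P))"
      using sum.shift_bounds_nat_ivl[of "\<lambda>k. g (k div P) (k mod P)" 0 "i * P" P]
      by (simp add: atLeast0LessThan add.commute)
    also have "\<dots> = (\<Sum>j<P. g i j)"
      using assms by (intro sum.cong) auto
    finally show "(\<Sum>k\<in>{i * P..<i * P + P}. g (k div P) (k mod P)) = (\<Sum>j<P. g i j)" .
  qed
  finally show ?thesis .
qed

lemma sum_kron_mult_cnj:
  assumes "P > 0"
  shows "(\<Sum>k<n * P. kron A P B i k * cnj (kron A P B j k))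
    = (\<Sum>m<n. A (i div P) m * cnj (A (j div P) m)) * (\<Sum>r<P. B (i mod P) r * cnj (B (j mod P) r))"
proof -
  have "(\<Sum>k<n * P. kron A P B i k * cnj (kron A P B j k))
      = (\<Sum>k<n * P. (\<lambda>m r. A (i div P) m * cnj (A (j div P) m) * (B (i mod P) r * cnj (B (j mod P) r))) (k div P) (k mod P))"
    unfolding kron_def by (simp add: mult_ac)
  also have "\<dots> = (\<Sum>m<n. \<Sum>r<P. A (i div P) m * cnj (A (j div P) m) * (B (i mod P) r * cnj (B (j mod P) r)))"
    by (rule sum_lessThan_mult_div_mod[OF assms])
  finally show ?thesis
    by (simp add: sum_product)
qed

lemma character_table_kron:
  assumes "character_table n A" and "character_table P B"
  shows "character_table (n * P) (kron A P B)"
proof -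
  interpret A: character_table n A by fact
  interpret B: character_table P B by fact
  have index_less: "i < n * P \<longleftrightarrow> i div P < n" for i
    using B.size_pos by (simp add: div_less_iff_less_mult)
  have mod_less: "i mod P < P" for i
    using B.size_pos by simp
  show ?thesis
  proof
    show "n * P > 0"
      using A.size_pos B.size_pos by simp
    show "kron A P B i k * cnj (kron A P B i k) = 1" if "i < n * P" "k < n * P" for i k
      using A.unimodular B.unimodular that[unfolded index_less] mod_less
      by (simp add: kron_def index_less mult_ac)
    show "kron A P B i k = kron A P B k i" if "i < n * P" "k < n * P" for i k
      using A.symmetric B.symmetric that[unfolded index_less] mod_less
      by (simp add: kron_def index_less)
    show "\<exists>l<n * P. \<forall>k<n * P. kron A P B l k = kron A P B i k * kron A P B j k"
      if ij: "i < n * P" "j < n * P" for i j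
    proof -
      obtain l1 where "l1 < n" "\<forall>k<n. A l1 k = A (i div P) k * A (j div P) k"
        using A.rows_mult_closed[of "i div P" "j div P"] ij unfolding index_less by blast
      moreover obtain l2 where "l2 < P" "\<forall>k<P. B l2 k = B (i mod P) k * B (j mod P) k"
        using B.rows_mult_closed mod_less by blast
      ultimately show ?thesis
        by (intro exI[of _ "l1 * P + l2"]) (auto simp: index_less mod_less kron_def)
    qed
    show "\<exists>l<n * P. \<forall>k<n * P. kron A P B l k = cnj (kron A P B i k)" if i: "i < n * P" for i
    proof -
      obtain l1 where "l1 < n" "\<forall>k<n. A l1 k = cnj (A (i div P) k)"
        using A.rows_cnj_closed[of "i div P"] i unfolding index_less by blast
      moreover obtain l2 where "l2 < P" "\<forall>k<P. B l2 k = cnj (B (i mod P) k)"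
        using B.rows_cnj_closed mod_less by blast
      ultimately show ?thesis
        by (intro exI[of _ "l1 * P + l2"]) (auto simp: index_less mod_less kron_def)
    qed
    show "(\<Sum>k<n * P. kron A P B i k * cnj (kron A P B j k)) = (if i = j then of_nat (n * P) else 0)"
      if "i < n * P" "j < n * P" for i j
      using that[unfolded index_less] mod_less
      by (simp add: sum_kron_mult_cnj B.size_pos A.rows_orthogonal B.rows_orthogonal index_less)
        (metis div_mult_mod_eq)
  qed
qed

lemma character_table_fourier_tensor:
  "(\<forall>n\<in>set ns. n > 0) \<Longrightarrow> character_table (prod_list ns) (fourier_tensor ns)"
proof (induction ns)
  case Nil
  show ?case
    by unfold_locales auto
next
  case (Cons n ns)
  then show ?case
    by (simp add: character_table_kron character_table_fourier)
qed

section \<open>The defect of a character table\<close>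

lemma sum_swap4:
  "(\<Sum>a\<in>A. \<Sum>b\<in>B. \<Sum>c\<in>C. \<Sum>d\<in>D. f a b c d) = (\<Sum>c\<in>C. \<Sum>d\<in>D. \<Sum>a\<in>A. \<Sum>b\<in>B. f a b c d)"
proof -
  have "(\<Sum>a\<in>A. \<Sum>b\<in>B. \<Sum>c\<in>C. \<Sum>d\<in>D. f a b c d) = (\<Sum>a\<in>A. \<Sum>c\<in>C. \<Sum>b\<in>B. \<Sum>d\<in>D. f a b c d)"
    by (rule sum.cong[OF refl], rule sum.swap)
  also have "\<dots> = (\<Sum>c\<in>C. \<Sum>a\<in>A. \<Sum>d\<in>D. \<Sum>b\<in>B. f a b c d)"
    by (subst sum.swap) (rule sum.cong[OF refl], rule sum.cong[OF refl], rule sum.swap)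
  also have "\<dots> = (\<Sum>c\<in>C. \<Sum>d\<in>D. \<Sum>a\<in>A. \<Sum>b\<in>B. f a b c d)"
    by (rule sum.cong[OF refl], rule sum.swap)
  finally show ?thesis .
qed

interpretation real_mat: vector_space real_scale_mat
  by unfold_locales (auto simp: real_scale_mat_def fun_eq_iff algebra_simps)

lemma sum_cmat_apply: "(sum f A) i j = (\<Sum>a\<in>A. f a i j)" for f :: "'a \<Rightarrow> cmat"
  by (induct A rule: infinite_finite_induct) auto

text \<open>Unlike \<open>Re w\<close> or \<open>Im w\<close> it keeps the
  rows orthogonal, because \<open>cas = \<alpha> w + \<beta> cnj w\<close> with \<open>\<alpha>\<^sup>2 + \<beta>\<^sup>2 = 0\<close>.\<close>

definition cas :: "cmat \<Rightarrow> nat \<Rightarrow> nat \<Rightarrow> real" where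
  "cas w i k = Re (w i k) + Im (w i k)"

lemma cas_eq: "complex_of_real (cas w i k) = (1 - \<i>) / 2 * w i k + (1 + \<i>) / 2 * cnj (w i k)"
  by (simp add: cas_def complex_eq_iff field_simps)

context character_table
begin

lemma entry_nonzero: "i < N \<Longrightarrow> k < N \<Longrightarrow> w i k \<noteq> 0"
  using unimodular by force

lemma rows_eqI:
  assumes "i < N" "j < N" "\<And>k. k < N \<Longrightarrow> w i k = w j k" shows "i = j"
proof (rule ccontr)
  assume "i \<noteq> j"
  have "(\<Sum>k<N. w i k * cnj (w j k)) = (\<Sum>k<N. w i k * cnj (w i k))"
    using assms by simp
  then show False
    using rows_orthogonal[of i j] rows_orthogonal[of i i] assms \<open>i \<noteq> j\<close> size_pos by simp
qed

lemma cas_symmetric: "i < N \<Longrightarrow> k < N \<Longrightarrow> cas w i k = cas w k i"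
  unfolding cas_def using symmetric by simp

lemma cas_rows_orthogonal:
  assumes "i < N" "j < N"
  shows "(\<Sum>k<N. cas w i k * cas w j k) = (if i = j then real N else 0)"
proof -
  define \<alpha> :: complex where "\<alpha> = (1 - \<i>) / 2"
  define \<beta> :: complex where "\<beta> = (1 + \<i>) / 2"
  obtain j' where j': "j' < N" "\<forall>k<N. w j' k = cnj (w j k)"
    using rows_cnj_closed assms(2) by blast
  have ww: "(\<Sum>k<N. w i k * w j k) = (if i = j' then of_nat N else 0)"
    using rows_orthogonal[OF assms(1) j'(1)] j'(2) by simp
  have wc: "(\<Sum>k<N. w i k * cnj (w j k)) = (if i = j then of_nat N else 0)"
    using rows_orthogonal assms by simp
  have "complex_of_real (\<Sum>k<N. cas w i k * cas w j k)
      = (\<Sum>k<N. (\<alpha> * w i k + \<beta> * cnj (w i k)) * (\<alpha> * w j k + \<beta> * cnj (w j k)))"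
    by (simp add: cas_eq \<alpha>_def \<beta>_def)
  also have "\<dots> = (\<alpha> * \<alpha>) * (\<Sum>k<N. w i k * w j k) + (\<beta> * \<beta>) * cnj (\<Sum>k<N. w i k * w j k)
      + (\<alpha> * \<beta>) * ((\<Sum>k<N. w i k * cnj (w j k)) + cnj (\<Sum>k<N. w i k * cnj (w j k)))"
    by (simp add: algebra_simps sum.distrib sum_distrib_left)
  also have "\<dots> = complex_of_real (if i = j then real N else 0)"
    unfolding ww wc by (simp add: \<alpha>_def \<beta>_def field_simps)
  finally show ?thesis
    using of_real_eq_iff by blast
qed

lemma cas_columns_orthogonal:
  assumes "i < N" "j < N"
  shows "(\<Sum>k<N. cas w k i * cas w k j) = (if i = j then real N else 0)"
  using cas_rows_orthogonal[OF assms] assms by (simp add: cas_symmetric)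

definition defect_cond :: "(nat \<Rightarrow> nat \<Rightarrow> real) \<Rightarrow> bool" where
  "defect_cond R \<longleftrightarrow>
     (\<forall>i<N. \<forall>j<N. (\<Sum>k<N. of_real (R i k - R j k) * w i k * cnj (w j k)) = 0)"

lemma antihermitian_iff_defect_cond:
  "antihermitian N (mat_mult_adj N (iR_had N R w) w) \<longleftrightarrow> defect_cond R"
proof -
  let ?M = "mat_mult_adj N (iR_had N R w) w"
  have M: "?M i j = (\<Sum>k<N. \<i> * of_real (R i k) * w i k * cnj (w j k))" if "i < N" for i j
    unfolding mat_mult_adj_def iR_had_def using that by (intro sum.cong) auto
  have "?M i j + cnj (?M j i) = \<i> * (\<Sum>k<N. of_real (R i k - R j k) * w i k * cnj (w j k))"
    if "i < N" "j < N" for i j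
    using that by (simp add: M sum_distrib_left flip: sum.distrib) (simp add: algebra_simps)
  then have "?M i j = - cnj (?M j i) \<longleftrightarrow> (\<Sum>k<N. of_real (R i k - R j k) * w i k * cnj (w j k)) = 0"
    if "i < N" "j < N" for i j
    using that by (simp add: eq_neg_iff_add_eq_0)
  then show ?thesis
    unfolding antihermitian_def defect_cond_def by blast
qed

definition ones :: "(nat \<times> nat) set" where
  "ones = {(e, k). e < N \<and> k < N \<and> w e k = 1}"

definition cas_tensor :: "nat \<times> nat \<Rightarrow> nat \<Rightarrow> nat \<Rightarrow> real" where
  "cas_tensor p i j = cas w (snd p) i * cas w (fst p) j"

lemma ones_subset: "ones \<subseteq> {..<N} \<times> {..<N}"
  by (auto simp: ones_def)

lemma finite_ones: "finite ones"
  using ones_subset by (rule finite_subset) simp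

lemma cas_eq_of_column_ratio_1:
  assumes "i < N" "j < N" "k < N" "w i k * cnj (w j k) = 1"
  shows "cas w k i = cas w k j"
proof -
  have "w i k = w i k * (cnj (w j k) * w j k)"
    using unimodular[OF assms(2,3)] by (simp add: mult.commute)
  also have "\<dots> = w j k"
    using assms(4) by (simp add: mult.assoc[symmetric])
  finally show ?thesis
    using assms by (simp add: cas_def symmetric)
qed

lemma defect_cond_cas_tensor:
  assumes "p \<in> ones" shows "defect_cond (cas_tensor p)"
  unfolding defect_cond_def
proof (intro allI impI)
  fix i j assume ij: "i < N" "j < N"
  obtain e k where p: "p = (e, k)" and ek: "e < N" "k < N" "w e k = 1"
    using assms unfolding ones_def by auto
  have "(\<Sum>l<N. of_real (cas_tensor p i l - cas_tensor p j l) * w i l * cnj (w j l))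
      = of_real (cas w k i - cas w k j) * (\<Sum>l<N. of_real (cas w e l) * (w i l * cnj (w j l)))"
    unfolding cas_tensor_def p by (simp add: sum_distrib_left algebra_simps)
  also have "\<dots> = 0"
  proof (cases "cas w k i = cas w k j")
    case False
    obtain j' where j': "j' < N" "\<forall>l<N. w j' l = cnj (w j l)"
      using rows_cnj_closed ij(2) by blast
    obtain d where d: "d < N" "\<forall>l<N. w d l = w i l * w j' l"
      using rows_mult_closed ij(1) j'(1) by blast
    obtain e' where e': "e' < N" "\<forall>l<N. w e' l = cnj (w e l)"
      using rows_cnj_closed ek(1) by blast
    have d_eq: "w d l = w i l * cnj (w j l)" if "l < N" for l
      using d j' that by simp
    have "w d k \<noteq> 1"
      using False cas_eq_of_column_ratio_1 ij ek d_eq by auto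
    then have "d \<noteq> e" "d \<noteq> e'"
      using ek e' by auto
    then have "(\<Sum>l<N. w d l * cnj (w e' l)) = 0" "(\<Sum>l<N. w d l * cnj (w e l)) = 0"
      using rows_orthogonal d(1) e'(1) ek(1) by auto
    moreover have "(\<Sum>l<N. of_real (cas w e l) * (w i l * cnj (w j l)))
        = (1 - \<i>) / 2 * (\<Sum>l<N. w d l * cnj (w e' l)) + (1 + \<i>) / 2 * (\<Sum>l<N. w d l * cnj (w e l))"
      by (simp add: sum_distrib_left flip: sum.distrib)
        (intro sum.cong refl, simp add: cas_eq d_eq e' algebra_simps)
    ultimately show ?thesis
      by simp
  qed simp
  finally show "(\<Sum>l<N. of_real (cas_tensor p i l - cas_tensor p j l) * w i l * cnj (w j l)) = 0" .
qed

definition defect_space :: "cmat set" where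
  "defect_space = {iR_had N R w | R. antihermitian N (mat_mult_adj N (iR_had N R w) w)}"

definition basis_mat :: "nat \<times> nat \<Rightarrow> cmat" where
  "basis_mat p = iR_had N (cas_tensor p) w"

definition coord :: "nat \<times> nat \<Rightarrow> cmat \<Rightarrow> complex" where
  "coord p X = (\<Sum>i<N. \<Sum>j<N. X i j * cnj (w i j) * of_real (cas_tensor p i j))"

lemma basis_mat_mem_defect_space:
  "p \<in> ones \<Longrightarrow> basis_mat p \<in> defect_space"
  unfolding defect_space_def basis_mat_def antihermitian_iff_defect_cond using defect_cond_cas_tensor by blast

lemma coord_iR_had: "coord p (iR_had N R w) = \<i> * of_real (\<Sum>i<N. \<Sum>j<N. R i j * cas_tensor p i j)"
proof -
  have entry: "iR_had N R w i j * cnj (w i j) * of_real (cas_tensor p i j)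
      = \<i> * of_real (R i j * cas_tensor p i j)" if "i < N" "j < N" for i j
    using that unimodular[OF that] unfolding iR_had_def by (simp add: algebra_simps)
  show ?thesis
    unfolding coord_def of_real_sum sum_distrib_left by (intro sum.cong refl) (simp add: entry)
qed

lemma coord_sum: "coord p (sum f T) = (\<Sum>v\<in>T. coord p (f v))"
proof -
  have "coord p (sum f T) = (\<Sum>i<N. \<Sum>j<N. \<Sum>v\<in>T. f v i j * cnj (w i j) * of_real (cas_tensor p i j))"
    unfolding coord_def sum_cmat_apply by (simp add: sum_distrib_right)
  also have "\<dots> = (\<Sum>i<N. \<Sum>v\<in>T. \<Sum>j<N. f v i j * cnj (w i j) * of_real (cas_tensor p i j))"
    by (simp only: sum.swap[of _ "{..<N}" T])
  also have "\<dots> = (\<Sum>v\<in>T. coord p (f v))"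
    unfolding coord_def by (rule sum.swap)
  finally show ?thesis .
qed

lemma coord_scale: "coord p (real_scale_mat r X) = of_real r * coord p X"
  unfolding coord_def real_scale_mat_def by (simp add: sum_distrib_left mult_ac)

lemma coord_basis_mat:
  assumes "p \<in> {..<N} \<times> {..<N}" "q \<in> {..<N} \<times> {..<N}"
  shows "coord q (basis_mat p) = (if p = q then \<i> * (of_nat N * of_nat N) else 0)"
proof -
  obtain e k e' k' where p: "p = (e, k)" and q: "q = (e', k')"
    by fastforce
  have "coord q (basis_mat p)
      = \<i> * of_real ((\<Sum>i<N. cas w k i * cas w k' i) * (\<Sum>j<N. cas w e j * cas w e' j))"
    unfolding basis_mat_def coord_iR_had cas_tensor_def sum_product p q
    by (simp add: mult_ac)
  also have "\<dots> = \<i> * of_real ((if k = k' then real N else 0) * (if e = e' then real N else 0))"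
    using assms unfolding p q by (simp only: cas_rows_orthogonal mem_Times_iff lessThan_iff fst_conv snd_conv)
  finally show ?thesis
    unfolding p q by auto
qed

lemma inj_on_basis_mat: "inj_on basis_mat ones"
proof (rule inj_onI)
  fix p q assume "p \<in> ones" "q \<in> ones" "basis_mat p = basis_mat q"
  then have "p \<in> {..<N} \<times> {..<N}" "q \<in> {..<N} \<times> {..<N}" "coord q (basis_mat p) = coord q (basis_mat q)"
    using ones_subset by auto
  then show "p = q"
    using size_pos by (simp add: coord_basis_mat split: if_splits)
qed

lemma independent_basis_mats: "real_mat.independent (basis_mat ` ones)"
proof (rule real_mat.independent_if_scalars_zero)
  show "finite (basis_mat ` ones)"
    using finite_ones by simp
  fix f X assume sum0: "(\<Sum>X\<in>basis_mat ` ones. real_scale_mat (f X) X) = 0"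
    and "X \<in> basis_mat ` ones"
  then obtain p where p: "p \<in> ones" "X = basis_mat p"
    by blast
  have "0 = coord p (\<Sum>q\<in>ones. real_scale_mat (f (basis_mat q)) (basis_mat q))"
    using sum0 by (simp add: sum.reindex[OF inj_on_basis_mat] coord_def)
  also have "\<dots> = (\<Sum>q\<in>ones. of_real (f (basis_mat q)) * coord p (basis_mat q))"
    by (simp add: coord_sum coord_scale)
  also have "\<dots> = (\<Sum>q\<in>ones. if q = p then of_real (f X) * (\<i> * (of_nat N * of_nat N)) else 0)"
    using p by (intro sum.cong refl) (simp add: coord_basis_mat subsetD[OF ones_subset])
  also have "\<dots> = of_real (f X) * (\<i> * (of_nat N * of_nat N))"
    using p finite_ones by simp
  finally show "f X = 0"
    using size_pos by simp
qed

lemma row_translation: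
  assumes "e < N"
  obtains \<sigma> where "bij_betw \<sigma> {..<N} {..<N}"
    and "\<And>i m. i < N \<Longrightarrow> m < N \<Longrightarrow> w (\<sigma> i) m = w i m * w e m"
proof -
  define \<sigma> where "\<sigma> i = (SOME l. l < N \<and> (\<forall>m<N. w l m = w i m * w e m))" for i
  have \<sigma>: "\<sigma> i < N \<and> (\<forall>m<N. w (\<sigma> i) m = w i m * w e m)" if "i < N" for i
    unfolding \<sigma>_def by (rule someI_ex) (use rows_mult_closed[OF that assms] in blast)
  have "inj_on \<sigma> {..<N}"
  proof (rule inj_onI)
    fix i i' assume "i \<in> {..<N}" "i' \<in> {..<N}" "\<sigma> i = \<sigma> i'"
    then have "w i m = w i' m" if "m < N" for m
      using \<sigma>[of i] \<sigma>[of i'] entry_nonzero[OF assms that] that by auto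
    then show "i = i'"
      using rows_eqI \<open>i \<in> {..<N}\<close> \<open>i' \<in> {..<N}\<close> by blast
  qed
  moreover have "\<sigma> ` {..<N} \<subseteq> {..<N}"
    using \<sigma> by auto
  ultimately have "bij_betw \<sigma> {..<N} {..<N}"
    by (simp add: bij_betw_def endo_inj_surj)
  then show ?thesis
    using that \<sigma> by blast
qed

lemma sum_row_translation_invariant:
  fixes g :: "nat \<Rightarrow> real"
  assumes "e < N" "k < N" "w e k \<noteq> 1"
    and invariant: "\<And>i l. i < N \<Longrightarrow> l < N \<Longrightarrow> (\<forall>m<N. w l m = w i m * w e m) \<Longrightarrow> g l = g i"
  shows "(\<Sum>i<N. g i * cas w k i) = 0"
proof -
  obtain \<sigma> where \<sigma>: "bij_betw \<sigma> {..<N} {..<N}" "\<And>i m. i < N \<Longrightarrow> m < N \<Longrightarrow> w (\<sigma> i) m = w i m * w e m"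
    using row_translation[OF assms(1)] by blast
  define T where "T = (\<Sum>i<N. of_real (g i) * w k i)"
  have "T = (\<Sum>i<N. of_real (g (\<sigma> i)) * w k (\<sigma> i))"
    unfolding T_def by (rule sum.reindex_bij_betw[OF \<sigma>(1), symmetric])
  also have "\<dots> = T * w e k"
  proof -
    \<comment> \<open>translating the column index of row k by \<open>\<sigma>\<close> multiplies it by \<open>w e k\<close>, while g is \<open>\<sigma>\<close>-invariant\<close>
    have "\<sigma> i < N" "w k (\<sigma> i) = w k i * w e k" "g (\<sigma> i) = g i" if "i < N" for i
      using bij_betwE[OF \<sigma>(1)] \<sigma>(2) invariant that assms(2) symmetric by auto
    then show ?thesis
      unfolding T_def sum_distrib_right by (intro sum.cong refl) (simp add: mult.assoc)
  qed
  finally have "T * (1 - w e k) = 0"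
    by (simp add: algebra_simps)
  then have "T = 0"
    using assms(3) by simp
  have "complex_of_real (\<Sum>i<N. g i * cas w k i)
      = (\<Sum>i<N. (1 - \<i>) / 2 * (of_real (g i) * w k i) + (1 + \<i>) / 2 * (of_real (g i) * cnj (w k i)))"
    unfolding of_real_sum of_real_mult cas_eq by (simp only: distrib_left mult.left_commute)
  also have "\<dots> = (1 - \<i>) / 2 * T + (1 + \<i>) / 2 * cnj T"
    unfolding T_def cnj_sum by (simp add: sum.distrib sum_distrib_left)
  finally have "complex_of_real (\<Sum>i<N. g i * cas w k i) = (1 - \<i>) / 2 * T + (1 + \<i>) / 2 * cnj T" .
  then show ?thesis
    using \<open>T = 0\<close> of_real_eq_0_iff by (metis add.right_neutral complex_cnj_zero mult_zero_right)
qed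

lemma cas_coefficient_vanishes:
  assumes "defect_cond R" "e < N" "k < N" "w e k \<noteq> 1"
  shows "(\<Sum>i<N. \<Sum>j<N. R i j * cas_tensor (e, k) i j) = 0"
proof -
  define h where "h i = (\<Sum>m<N. of_real (R i m) * w e m)" for i
  define g where "g i = (\<Sum>j<N. R i j * cas w e j)" for i
  have "g l = g i" if "i < N" "l < N" "\<forall>m<N. w l m = w i m * w e m" for i l
  proof -
    have ratio: "w l m * cnj (w i m) = w e m" if "m < N" for m
      using \<open>\<forall>m<N. _\<close> unimodular[OF \<open>i < N\<close> that] that by (simp add: mult_ac)
    have "0 = (\<Sum>m<N. of_real (R l m - R i m) * w l m * cnj (w i m))"
      using assms(1) that(1,2) unfolding defect_cond_def by simp
    also have "\<dots> = (\<Sum>m<N. of_real (R l m) * w e m - of_real (R i m) * w e m)"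
      by (intro sum.cong refl) (simp add: ratio mult.assoc left_diff_distrib)
    finally have "h l = h i"
      unfolding h_def by (simp add: sum_subtractf)
    moreover have "g i = Re (h i) + Im (h i)" for i
      unfolding g_def h_def cas_def by (simp add: sum.distrib distrib_left)
    ultimately show ?thesis
      by simp
  qed
  then have "(\<Sum>i<N. g i * cas w k i) = 0"
    by (rule sum_row_translation_invariant[OF assms(2-4)])
  then show ?thesis
    by (simp add: g_def cas_tensor_def sum_distrib_left mult_ac)
qed

lemma cas_tensor_expansion:
  assumes "i < N" "j < N"
  shows "(\<Sum>e<N. \<Sum>k<N. (\<Sum>i'<N. \<Sum>j'<N. R i' j' * cas_tensor (e, k) i' j') * cas_tensor (e, k) i j)
    = real N * real N * R i j"
proof -
  have "(\<Sum>e<N. \<Sum>k<N. (\<Sum>i'<N. \<Sum>j'<N. R i' j' * cas_tensor (e, k) i' j') * cas_tensor (e, k) i j)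
      = (\<Sum>e<N. \<Sum>k<N. \<Sum>i'<N. \<Sum>j'<N. R i' j' * (cas w k i' * cas w k i) * (cas w e j' * cas w e j))"
    by (simp add: cas_tensor_def sum_distrib_left sum_distrib_right mult_ac)
  also have "\<dots> = (\<Sum>i'<N. \<Sum>j'<N. \<Sum>e<N. \<Sum>k<N. R i' j' * (cas w k i' * cas w k i) * (cas w e j' * cas w e j))"
    by (rule sum_swap4)
  also have "\<dots> = (\<Sum>i'<N. \<Sum>j'<N. R i' j' * ((\<Sum>k<N. cas w k i' * cas w k i) * (\<Sum>e<N. cas w e j' * cas w e j)))"
    by (simp add: sum_product sum_distrib_left mult_ac)
  also have "\<dots> = (\<Sum>i'<N. \<Sum>j'<N. if i' = i \<and> j' = j then real N * real N * R i j else 0)"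
    using assms by (intro sum.cong refl) (auto simp: cas_columns_orthogonal)
  also have "\<dots> = (\<Sum>i'<N. if i' = i then (\<Sum>j'<N. if j' = j then real N * real N * R i j else 0) else 0)"
    by (intro sum.cong refl) auto
  also have "\<dots> = real N * real N * R i j"
    using assms by simp
  finally show ?thesis .
qed

lemma defect_space_subset_span:
  "defect_space \<subseteq> real_mat.span (basis_mat ` ones)"
proof
  fix X assume "X \<in> defect_space"
  then obtain R where X: "X = iR_had N R w" and R: "defect_cond R"
    by (auto simp: defect_space_def antihermitian_iff_defect_cond)
  define c where "c p = (\<Sum>i<N. \<Sum>j<N. R i j * cas_tensor p i j) / (real N * real N)" for p
  have c_vanishes: "c p = 0" if "p \<in> {..<N} \<times> {..<N} - ones" for p
    using that cas_coefficient_vanishes[OF R] by (auto simp: c_def ones_def)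
  have "R i j = (\<Sum>p\<in>ones. c p * cas_tensor p i j)" if "i < N" "j < N" for i j
  proof -
    have "(\<Sum>p\<in>ones. c p * cas_tensor p i j) = (\<Sum>p\<in>{..<N} \<times> {..<N}. c p * cas_tensor p i j)"
      using ones_subset c_vanishes by (intro sum.mono_neutral_left) auto
    also have "\<dots> = (\<Sum>e<N. \<Sum>k<N. c (e, k) * cas_tensor (e, k) i j)"
      by (simp add: sum.cartesian_product)
    also have "\<dots> = R i j"
      using cas_tensor_expansion[OF that, of R] size_pos
      by (simp add: c_def sum_divide_distrib[symmetric] field_simps)
    finally show ?thesis ..
  qed
  then have "X = (\<Sum>p\<in>ones. real_scale_mat (c p) (basis_mat p))"
    unfolding X basis_mat_def
    by (auto simp: fun_eq_iff iR_had_def sum_cmat_apply real_scale_mat_def sum_distrib_left sum_distrib_right mult_ac)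
  then show "X \<in> real_mat.span (basis_mat ` ones)"
    by (simp add: real_mat.span_sum real_mat.span_scale real_mat.span_base)
qed

theorem undephased_defect_eq_card_ones: "undephased_defect N w = card ones"
  unfolding undephased_defect_def defect_space_def[symmetric]
proof (rule real_mat.dim_unique)
  show "basis_mat ` ones \<subseteq> defect_space"
    using basis_mat_mem_defect_space by blast
  show "card (basis_mat ` ones) = card ones"
    by (rule card_image[OF inj_on_basis_mat])
qed (fact defect_space_subset_span independent_basis_mats)+

end

section \<open>Counting the ones of a tensor product of Fourier matrices\<close>

lemma dvd_mult_iff_div_gcd_dvd:
  fixes n t e :: nat
  assumes "n > 0"
  shows "n dvd e * t \<longleftrightarrow> n div gcd n t dvd e"
proof -
  define g where "g = gcd n t"
  obtain d where nd: "n = d * g"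
    unfolding g_def by (metis gcd_dvd1 dvd_def mult.commute)
  obtain t' where tt: "t = t' * g"
    unfolding g_def by (metis gcd_dvd2 dvd_def mult.commute)
  have "g > 0"
    using assms unfolding g_def by simp
  have "gcd n t = gcd d t' * g"
    using nd tt by (simp add: gcd_mult_distrib_nat mult.commute)
  then have "coprime d t'"
    using \<open>g > 0\<close> assms unfolding g_def coprime_iff_gcd_eq_1 by auto
  have "n dvd e * t \<longleftrightarrow> d * g dvd (e * t') * g"
    using nd tt by (simp add: mult_ac)
  also have "\<dots> \<longleftrightarrow> d dvd e"
    using \<open>g > 0\<close> \<open>coprime d t'\<close> by (simp add: coprime_dvd_mult_left_iff)
  moreover have "n div gcd n t = d"
    unfolding g_def[symmetric] using nd \<open>g > 0\<close> by simp
  ultimately show ?thesis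
    by simp
qed

lemma card_dvd_mult_eq_gcd:
  fixes n t :: nat
  assumes "n > 0"
  shows "card {e. e < n \<and> n dvd e * t} = gcd n t"
proof -
  define g where "g = gcd n t"
  define d where "d = n div g"
  have n: "n = d * g" and "d > 0"
    using assms by (simp_all add: d_def g_def div_greater_zero_iff)
  have dvd_iff: "n dvd e * t \<longleftrightarrow> d dvd e" for e
    unfolding d_def g_def by (rule dvd_mult_iff_div_gcd_dvd[OF assms])
  have "{e. e < n \<and> n dvd e * t} = (\<lambda>q. d * q) ` {..<g}"
  proof (intro set_eqI iffI)
    fix e assume "e \<in> {e. e < n \<and> n dvd e * t}"
    then have "d dvd e" "e < d * g"
      using dvd_iff n by auto
    then show "e \<in> (\<lambda>q. d * q) ` {..<g}"
      by (auto elim!: dvdE)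
  next
    fix e assume "e \<in> (\<lambda>q. d * q) ` {..<g}"
    then obtain q where "e = d * q" "q < g"
      by blast
    then show "e \<in> {e. e < n \<and> n dvd e * t}"
      using \<open>d > 0\<close> dvd_iff n by simp
  qed
  moreover have "inj_on (\<lambda>q. d * q) {..<g}"
    using \<open>d > 0\<close> by (simp add: inj_on_def)
  ultimately show ?thesis
    by (simp add: card_image g_def)
qed

lemma sum_fourier_power:
  assumes "n > 0"
  shows "(\<Sum>e<n. \<Sum>k<n. fourier n e k ^ t) = of_nat (n * gcd n t)"
proof -
  have row: "(\<Sum>k<n. fourier n e k ^ t) = (if n dvd e * t then of_nat n else 0)" for e
  proof -
    define q where "q = zeta n ^ (e * t)"
    have "q ^ n = 1"
      using zeta_power_eq_1_iff[OF assms] by (simp add: q_def flip: power_mult)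
    moreover have "q = 1 \<longleftrightarrow> n dvd e * t"
      unfolding q_def by (rule zeta_power_eq_1_iff[OF assms])
    moreover have "(\<Sum>k<n. fourier n e k ^ t) = (\<Sum>k<n. q ^ k)"
      unfolding fourier_eq_zeta_power q_def by (simp flip: power_mult add: mult_ac)
    ultimately show ?thesis
      by (simp add: sum_gp_strict)
  qed
  have "(\<Sum>e<n. \<Sum>k<n. fourier n e k ^ t) = of_nat n * of_nat (card {e. e < n \<and> n dvd e * t})"
    by (simp only: row sum.If_cases finite_lessThan) (simp add: Int_def lessThan_def conj_commute)
  then show ?thesis
    using card_dvd_mult_eq_gcd[OF assms] by simp
qed

lemma sum_fourier_tensor_power:
  assumes "\<forall>n\<in>set ns. n > 0"
  shows "(\<Sum>e<prod_list ns. \<Sum>k<prod_list ns. fourier_tensor ns e k ^ t)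
    = of_nat (prod_list ns * (\<Prod>n\<leftarrow>ns. gcd n t))"
  using assms
proof (induction ns)
  case (Cons n ns)
  define P where "P = prod_list ns"
  have "P > 0"
    using Cons.prems unfolding P_def by (metis gr0I list.set_intros(2) prod_list_zero_iff)
  have "(\<Sum>e<n * P. \<Sum>k<n * P. kron (fourier n) P (fourier_tensor ns) e k ^ t)
      = (\<Sum>e<n * P. \<Sum>k1<n. \<Sum>k2<P. fourier n (e div P) k1 ^ t * fourier_tensor ns (e mod P) k2 ^ t)"
    unfolding kron_def power_mult_distrib
    by (rule sum.cong[OF refl], rule sum_lessThan_mult_div_mod[OF \<open>P > 0\<close>])
  also have "\<dots> = (\<Sum>e1<n. \<Sum>e2<P. \<Sum>k1<n. \<Sum>k2<P. fourier n e1 k1 ^ t * fourier_tensor ns e2 k2 ^ t)"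
    by (rule sum_lessThan_mult_div_mod[OF \<open>P > 0\<close>])
  also have "\<dots> = (\<Sum>e1<n. \<Sum>k1<n. fourier n e1 k1 ^ t) * (\<Sum>e2<P. \<Sum>k2<P. fourier_tensor ns e2 k2 ^ t)"
    by (simp add: sum_product)
  finally show ?case
    using Cons by (simp add: P_def sum_fourier_power)
qed simp

lemma fourier_tensor_power_eq_1:
  assumes "\<forall>n\<in>set ns. n > 0 \<and> n dvd M"
  shows "fourier_tensor ns i j ^ M = 1"
  using assms
proof (induction ns arbitrary: i j)
  case (Cons n ns)
  have "fourier n i' j' ^ M = 1" for i' j'
    using Cons.prems by (simp add: fourier_eq_zeta_power zeta_power_eq_1_iff flip: power_mult)
  then show ?case
    using Cons by (simp add: kron_def power_mult_distrib)
qed simp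

lemma card_ones_fourier_tensor:
  assumes "\<forall>n\<in>set ns. n > 0 \<and> n dvd M" "M > 0"
  shows "card {(e, k). e < prod_list ns \<and> k < prod_list ns \<and> fourier_tensor ns e k = 1} * M
    = prod_list ns * (\<Sum>t<M. (\<Prod>n\<leftarrow>ns. gcd n t))"
proof -
  define P where "P = prod_list ns"
  define W where "W = fourier_tensor ns"
  have geometric: "(\<Sum>t<M. W e k ^ t) = (if W e k = 1 then of_nat M else 0)" for e k
    using fourier_tensor_power_eq_1[OF assms(1)] by (simp add: W_def sum_gp_strict)
  have "of_nat (card {(e, k). e < P \<and> k < P \<and> W e k = 1} * M)
      = (\<Sum>p\<in>{..<P} \<times> {..<P}. if W (fst p) (snd p) = 1 then (of_nat M :: complex) else 0)"
  proof -
    have "{(e, k). e < P \<and> k < P \<and> W e k = 1} = {p \<in> {..<P} \<times> {..<P}. W (fst p) (snd p) = 1}"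
      by auto
    then show ?thesis
      by (simp add: sum.If_cases Int_def)
  qed
  also have "\<dots> = (\<Sum>e<P. \<Sum>k<P. \<Sum>t<M. W e k ^ t)"
    by (simp add: geometric sum.cartesian_product case_prod_beta)
  also have "\<dots> = (\<Sum>t<M. \<Sum>e<P. \<Sum>k<P. W e k ^ t)"
    by (simp add: sum.swap[of _ "{..<M}"])
  also have "\<dots> = of_nat (P * (\<Sum>t<M. (\<Prod>n\<leftarrow>ns. gcd n t)))"
    using assms(1) by (simp add: P_def W_def sum_fourier_tensor_power sum_distrib_left)
  finally show ?thesis
    unfolding P_def W_def using of_nat_eq_iff by blast
qed

section \<open>Divisibility of the gcd sums\<close>

definition gcd_prod_sum :: "nat \<Rightarrow> nat list \<Rightarrow> nat \<Rightarrow> nat" where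
  "gcd_prod_sum a ks K = (\<Sum>t<a ^ K. \<Prod>k\<leftarrow>ks. gcd (a ^ k) t)"

definition count_pos :: "nat list \<Rightarrow> nat" where
  "count_pos ks = length (filter (\<lambda>k. 0 < k) ks)"

lemma prod_gcd_power_mult:
  fixes a t :: nat
  shows "(\<Prod>k\<leftarrow>ks. gcd (a ^ k) (a * t)) = a ^ count_pos ks * (\<Prod>k\<leftarrow>map (\<lambda>k. k - 1) ks. gcd (a ^ k) t)"
proof (induction ks)
  case (Cons k ks)
  then show ?case
    by (cases k) (simp_all add: count_pos_def gcd_mult_distrib_nat mult_ac)
qed (simp add: count_pos_def)

lemma prod_gcd_power_coprime:
  fixes a t :: nat
  assumes "prime a" "\<not> a dvd t"
  shows "(\<Prod>k\<leftarrow>ks. gcd (a ^ k) t) = 1"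
proof -
  have "coprime (a ^ k) t" for k
    using prime_imp_coprime[OF assms] by simp
  then show ?thesis
    by (induction ks) simp_all
qed

lemma gcd_prod_sum_Suc:
  assumes "prime a"
  shows "gcd_prod_sum a ks (Suc K) = (a ^ Suc K - a ^ K) + a ^ count_pos ks * gcd_prod_sum a (map (\<lambda>k. k - 1) ks) K"
proof -
  have "a > 0"
    using assms prime_gt_0_nat by blast
  define f where "f t = (\<Prod>k\<leftarrow>ks. gcd (a ^ k) t)" for t
  define A where "A = {t \<in> {..<a ^ Suc K}. \<not> a dvd t}"
  define B where "B = (\<lambda>t. a * t) ` {..<a ^ K}"
  have inj: "inj_on (\<lambda>t. a * t) {..<a ^ K}"
    using \<open>a > 0\<close> by (simp add: inj_on_def)
  have split: "{..<a ^ Suc K} = A \<union> B" and disjoint: "A \<inter> B = {}"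
    using \<open>a > 0\<close> by (auto simp: A_def B_def elim!: dvdE)
  have card_B: "card B = a ^ K"
    using inj by (simp add: B_def card_image)
  have "card A + card B = a ^ Suc K"
    using card_Un_disjoint[of A B] split disjoint by (metis card_lessThan finite_Un finite_lessThan)
  then have "card A = a ^ Suc K - a ^ K"
    using card_B by simp
  moreover have "sum f A = card A"
    using prod_gcd_power_coprime[OF assms] by (simp add: A_def f_def)
  moreover have "sum f B = a ^ count_pos ks * gcd_prod_sum a (map (\<lambda>k. k - 1) ks) K"
    unfolding B_def gcd_prod_sum_def sum.reindex[OF inj] comp_def f_def prod_gcd_power_mult
    by (simp add: sum_distrib_left)
  moreover have "gcd_prod_sum a ks (Suc K) = sum f A + sum f B"
    unfolding gcd_prod_sum_def f_def[symmetric] split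
    by (rule sum.union_disjoint) (use disjoint in \<open>auto simp: A_def B_def\<close>)
  ultimately show ?thesis
    by simp
qed

lemma count_pos_pos: "k \<in> set ks \<Longrightarrow> 0 < k \<Longrightarrow> 0 < count_pos ks"
  unfolding count_pos_def by (rule length_pos_if_in_set[of k]) simp

lemma sum_list_map_minus_1: "sum_list (map (\<lambda>k. k - 1) ks) + count_pos ks = sum_list ks"
  by (induction ks) (auto simp: count_pos_def)

lemma power_dvd_gcd_prod_sum:
  assumes "prime a"
  shows "\<forall>k\<in>set ks. k \<le> K \<Longrightarrow> K \<in> set ks \<Longrightarrow> a ^ (K - 1) dvd gcd_prod_sum a ks K"
proof (induction K arbitrary: ks)
  case (Suc K)
  define ks' where "ks' = map (\<lambda>k. k - 1) ks"
  have "\<forall>k\<in>set ks'. k \<le> K" "K \<in> set ks'"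
    using Suc.prems unfolding ks'_def by force+
  then have IH: "a ^ (K - 1) dvd gcd_prod_sum a ks' K"
    by (rule Suc.IH)
  have "a ^ K dvd a ^ count_pos ks * gcd_prod_sum a ks' K"
  proof (cases K)
    case (Suc K')
    have "a dvd a ^ count_pos ks"
      using count_pos_pos[OF Suc.prems(2)] by (simp add: dvd_power)
    then show ?thesis
      using IH Suc by (simp add: mult_dvd_mono)
  qed simp
  moreover have "a ^ K dvd a ^ Suc K - a ^ K"
    by (simp add: algebra_simps flip: diff_mult_distrib2)
  ultimately show ?case
    unfolding gcd_prod_sum_Suc[OF assms] ks'_def by simp
qed simp

lemma prod_list_map_power: "(\<Prod>k\<leftarrow>ks. a ^ k) = a ^ sum_list ks"
  by (induction ks) (simp_all add: power_add)

lemma one_plus_power_mod_square: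
  fixes b :: "'a::comm_ring_1"
  shows "b ^ 2 dvd (1 + b) ^ m - (1 + of_nat m * b)"
proof (induction m)
  case (Suc m)
  then obtain q where "(1 + b) ^ m - (1 + of_nat m * b) = b ^ 2 * q"
    by (blast elim: dvdE)
  then have "(1 + b) ^ Suc m - (1 + of_nat (Suc m) * b) = b ^ 2 * ((1 + b) * q + of_nat m)"
    by (simp add: algebra_simps power2_eq_square)
  then show ?case
    by (simp only: dvd_triv_left)
qed simp

lemma power_mod_square:
  fixes a :: nat
  obtains y where "int a ^ m = 1 + int m * (int a - 1) + (int a - 1) ^ 2 * y"
proof -
  obtain y where "(1 + (int a - 1)) ^ m - (1 + of_nat m * (int a - 1)) = (int a - 1) ^ 2 * y"
    using one_plus_power_mod_square by (blast elim: dvdE)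
  then show ?thesis
    using that[of y] by (simp add: algebra_simps)
qed

lemma gcd_prod_sum_mod_square:
  assumes "prime a"
  shows "\<forall>k\<in>set ks. k \<le> K \<Longrightarrow>
    (int a - 1) ^ 2 dvd int (gcd_prod_sum a ks K) - (1 + int (K + sum_list ks) * (int a - 1))"
proof (induction K arbitrary: ks)
  case 0
  then have s0: "sum_list ks = 0"
    by (simp add: sum_list_eq_0_iff)
  have "gcd_prod_sum a ks 0 = 1"
    unfolding gcd_prod_sum_def by (simp add: prod_list_map_power s0)
  then show ?case
    unfolding s0 by simp
next
  case (Suc K)
  define b where "b = int a - 1"
  define ks' where "ks' = map (\<lambda>k. k - 1) ks"
  define p where "p = count_pos ks"
  define s where "s = sum_list ks"
  have "\<forall>k\<in>set ks'. k \<le> K"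
    using Suc.prems unfolding ks'_def by auto
  then obtain z where z: "int (gcd_prod_sum a ks' K) = 1 + int (K + sum_list ks') * b + b ^ 2 * z"
    using Suc.IH unfolding b_def by (force elim: dvdE simp: algebra_simps)
  obtain x where x: "int a ^ K = 1 + int K * b + b ^ 2 * x"
    using power_mod_square unfolding b_def by blast
  obtain y where y: "int a ^ p = 1 + int p * b + b ^ 2 * y"
    using power_mod_square unfolding b_def by blast
  have sum_ks': "int (sum_list ks') = int s - int p"
    using sum_list_map_minus_1[of ks] unfolding ks'_def p_def s_def by linarith
  have "int (a ^ Suc K - a ^ K) = int a ^ K * b"
    using prime_gt_0_nat[OF assms] by (simp add: of_nat_diff b_def algebra_simps)
  then have T: "int (gcd_prod_sum a ks (Suc K)) = int a ^ K * b + int a ^ p * int (gcd_prod_sum a ks' K)"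
    unfolding gcd_prod_sum_Suc[OF assms] ks'_def p_def by simp
  have "int (gcd_prod_sum a ks (Suc K)) - (1 + int (Suc K + s) * b)
      = b ^ 2 * (x * b + int K + z + y + int p * (int K + int s - int p) + int p * b * z
                 + (int K + int s - int p) * b * y + b ^ 2 * y * z)"
    by (simp add: T x y z sum_ks' algebra_simps power2_eq_square)
  then show ?case
    unfolding b_def s_def by (simp only: dvd_triv_left)
qed

lemma power_dvd_of_mult_eq:
  fixes a D T :: nat
  assumes "a > 0" "D * a ^ K = a ^ n * T" "a ^ (K - 1) dvd T"
  shows "a ^ (n - 1) dvd D"
proof (cases "n = 0")
  case False
  have "a ^ (n - 1) * a ^ K dvd a ^ n * a ^ (K - 1)"
    using False by (simp add: le_imp_power_dvd flip: power_add)
  also have "\<dots> dvd D * a ^ K"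
    using assms(2,3) by simp
  finally show ?thesis
    using assms(1) by simp
qed simp

lemma square_dvd_of_mult_eq:
  fixes a D T :: nat
  assumes "D * a ^ K = a ^ n * T"
    and "(int a - 1) ^ 2 dvd int T - (1 + int (K + n) * (int a - 1))"
  shows "(int a - 1) ^ 2 dvd int D - (2 * int a ^ n - 1)"
proof -
  define b where "b = int a - 1"
  obtain q where q: "int T = 1 + int (K + n) * b + b ^ 2 * q"
    using assms(2) unfolding b_def by (force elim: dvdE simp: algebra_simps)
  obtain x where x: "int a ^ n = 1 + int n * b + b ^ 2 * x"
    using power_mod_square unfolding b_def by blast
  obtain y where y: "int a ^ K = 1 + int K * b + b ^ 2 * y"
    using power_mod_square unfolding b_def by blast
  have "int a ^ K * int D = int a ^ n * int T"
    using arg_cong[OF assms(1), of int] by (simp add: mult.commute)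
  then have "int a ^ K * (int D - 1 - 2 * int n * b)
      = b ^ 2 * (int n * int (K + n) + q + x + int n * b * q + int (K + n) * b * x + b ^ 2 * x * q
                 - 2 * int n * int K - y - 2 * int n * b * y)"
    by (simp add: right_diff_distrib q x y algebra_simps power2_eq_square)
  moreover have "coprime (b ^ 2) (int a ^ K)"
    unfolding b_def using coprime_diff_one_left[of "int a"] by simp
  ultimately have "b ^ 2 dvd int D - 1 - 2 * int n * b"
    by (metis coprime_dvd_mult_right_iff dvd_triv_left)
  moreover have "int D - (2 * int a ^ n - 1) = (int D - 1 - 2 * int n * b) - b ^ 2 * (2 * x)"
    by (simp add: x algebra_simps)
  ultimately show ?thesis
    unfolding b_def by (metis dvd_diff dvd_triv_left)
qed

lemma undephased_defect_fourier_tensor: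
  assumes "a > 0" "\<forall>k\<in>set ks. k \<le> K"
  shows "undephased_defect (a ^ sum_list ks) (fourier_tensor (map (\<lambda>k. a ^ k) ks)) * a ^ K
    = a ^ sum_list ks * gcd_prod_sum a ks K"
proof -
  let ?ns = "map (\<lambda>k. a ^ k) ks"
  have N: "prod_list ?ns = a ^ sum_list ks"
    by (rule prod_list_map_power)
  have "\<forall>n\<in>set ?ns. n > 0 \<and> n dvd a ^ K"
    using assms by (auto intro: le_imp_power_dvd)
  from card_ones_fourier_tensor[OF this] assms(1)
  have "card {(e, k). e < a ^ sum_list ks \<and> k < a ^ sum_list ks \<and> fourier_tensor ?ns e k = 1} * a ^ K
      = a ^ sum_list ks * gcd_prod_sum a ks K"
    by (simp add: N gcd_prod_sum_def comp_def)
  moreover have "character_table (a ^ sum_list ks) (fourier_tensor ?ns)"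
    using character_table_fourier_tensor[of ?ns] assms(1) by (simp add: N)
  ultimately show ?thesis
    by (simp add: character_table.undephased_defect_eq_card_ones character_table.ones_def)
qed

theorem corollary5p5:
  fixes a :: nat and ks :: "nat list"
  assumes "prime a"
    and "ks \<noteq> []"
    and "Max (set ks) > 0"
  defines "N \<equiv> a ^ sum_list ks"
  defines "F \<equiv> fourier_tensor (map (\<lambda>k. a ^ k) ks)"
  shows "a ^ (sum_list ks - 1) dvd undephased_defect N F \<and>
         (int a - 1)^2 dvd (int (undephased_defect N F) - (2 * int N - 1))"
proof -
  define K where "K = Max (set ks)"
  have a: "a > 0"
    using assms(1) prime_gt_0_nat by blast
  have K: "\<forall>k\<in>set ks. k \<le> K" "K \<in> set ks"
    using assms(2) by (simp_all add: K_def)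
  have defect: "undephased_defect N F * a ^ K = a ^ sum_list ks * gcd_prod_sum a ks K"
    unfolding N_def F_def by (rule undephased_defect_fourier_tensor[OF a K(1)])
  show ?thesis
  proof
    show "a ^ (sum_list ks - 1) dvd undephased_defect N F"
      using power_dvd_of_mult_eq[OF a defect] power_dvd_gcd_prod_sum[OF assms(1) K] by blast
    show "(int a - 1)^2 dvd (int (undephased_defect N F) - (2 * int N - 1))"
      using square_dvd_of_mult_eq[OF defect] gcd_prod_sum_mod_square[OF assms(1) K(1)]
      by (simp add: N_def add.commute)
  qed
qed

end
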